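(* Let $p,q,r\in(0,1)$ with $p+q+r=1$. Let $X_1,\eta_2,\eta_3,\ldots$ be independent random variables, each taking the values $1,-1,0$ with probabilities $p,q,r$ respectively, and let $K_3,K_4,\ldots$ be i.i.d. random variables, uniformly distributed on $\{1,2\}$ and independent of the previous ones. Set $X_2=\eta_2X_1$, $X_{n+1}=\eta_{n+1}X_{K_{n+1}}$ for $n\ge2$, and $S_n=\sum_{k=1}^nX_k$. Then: (a) as $n\to\infty$, $S_n/n$ converges in distribution to a random variable taking the value $p-q$ with probability $p^2$, the value $(p-q)/2$ with probability $pr$, the value $0$ with probability $pq+q^2+r$, the value $-(p-q)/2$ with probability $qr$, and the value $-(p-q)$ with probability $pq$; (b) as $n\to\infty$, $E(S_n/n)\to\dfrac{(p-q)^2}{2}(1+p-q)$ and $\operatorname{Var}(S_n/n)\to\dfrac{(p-q)^2}{4}\Big((p+q)(1+3p-q)-(p-q)^2\big(1+(p-q)\big)^2\Big)$.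
   Context: This is the elephant random walk with delays in which the elephant remembers only the first two steps: the second step is built from the first, and each step $n+1\ge3$ picks one of the first two steps uniformly at random and repeats it (probability $p$), reverses it (probability $q$), or is $0$ (probability $r$). *)

theory Defs
  imports "HOL-Probability.Probability"
begin

text \<open>X_2 = eta_2 X_1 and, for n \<ge> 3,
  X_n = eta_n X_{K_n}.  (Index 0 is unused and set to 0.)\<close>
definition erw_X :: "('a \<Rightarrow> real) \<Rightarrow> (nat \<Rightarrow> 'a \<Rightarrow> real) \<Rightarrow> (nat \<Rightarrow> 'a \<Rightarrow> nat) \<Rightarrow> nat \<Rightarrow> 'a \<Rightarrow> real" where
  "erw_X X1 \<eta> K n \<omega> =
     (if n = 0 then 0
      else if n = 1 then X1 \<omega>
      else if n = 2 then \<eta> 2 \<omega> * X1 \<omega>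
      else \<eta> n \<omega> * (if K n \<omega> = 1 then X1 \<omega> else \<eta> 2 \<omega> * X1 \<omega>))"

definition erw_S :: "('a \<Rightarrow> real) \<Rightarrow> (nat \<Rightarrow> 'a \<Rightarrow> real) \<Rightarrow> (nat \<Rightarrow> 'a \<Rightarrow> nat) \<Rightarrow> nat \<Rightarrow> 'a \<Rightarrow> real" where
  "erw_S X1 \<eta> K n \<omega> = (\<Sum>k=1..n. erw_X X1 \<eta> K k \<omega>)"

text \<open>The joint family used to express mutual independence:
  Inl 1 is X1, Inl n (n \<ge> 2) is eta n, Inr n (n \<ge> 3) is K n (as a real).\<close>
definition erw_family :: "('a \<Rightarrow> real) \<Rightarrow> (nat \<Rightarrow> 'a \<Rightarrow> real) \<Rightarrow> (nat \<Rightarrow> 'a \<Rightarrow> nat) \<Rightarrow> nat + nat \<Rightarrow> 'a \<Rightarrow> real" where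
  "erw_family X1 \<eta> K i = (case i of Inl n \<Rightarrow> (if n = 1 then X1 else \<eta> n)
                                 | Inr n \<Rightarrow> (\<lambda>\<omega>. real (K n \<omega>)))"

definition erw_index :: "(nat + nat) set" where
  "erw_index = Inl ` {1..} \<union> Inr ` {3..}"

definition erw_limit :: "real \<Rightarrow> real \<Rightarrow> real \<Rightarrow> real pmf" where
  "erw_limit p q r = pmf_of_list
     [(p - q, p^2), ((p - q)/2, p*r), (0, p*q + q^2 + r), (-(p - q)/2, q*r), (-(p - q), p*q)]"

end

theory Submission
  imports Defs
begin

text \<open>
  For \<open>n \<ge> 3\<close> the step \<open>X\<^sub>n = \<eta>\<^sub>n X\<^bsub>K\<^sub>n\<^esub>\<close> has, given the first two steps, the conditional
  mean \<open>L = (p - q) X\<^sub>1 (1 + \<eta>\<^sub>2) / 2\<close>, and the centred steps \<open>Z\<^sub>k = X\<^sub>k - L\<close> with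
  distinct \<open>k \<ge> 3\<close> are conditionally independent with mean zero, hence uncorrelated.
  As they are bounded, \<open>E (S\<^sub>n / n - L)\<^sup>2 = O(1/n)\<close>. Mean-square convergence gives
  convergence in probability, hence in distribution, together with convergence of mean and
  variance. The limit \<open>L\<close> is a function of the independent three-point variables
  \<open>X\<^sub>1\<close> and \<open>\<eta>\<^sub>2\<close>, from which its law and moments are computed.
\<close>

lemma sum_list_filter_fst_in:
  fixes xs :: "('a \<times> real) list"
  shows "sum_list (map snd (filter (\<lambda>x. fst x \<in> A) xs)) = (\<Sum>(v, w)\<leftarrow>xs. w * indicator A v)"
  by (induction xs) auto

lemma sum_sum_le_of_sparse:
  fixes e :: "'i \<Rightarrow> 'i \<Rightarrow> real"
  assumes I: "finite I" and E: "finite E"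
    and bound: "\<And>j k. j \<in> I \<Longrightarrow> k \<in> I \<Longrightarrow> \<bar>e j k\<bar> \<le> C"
    and zero: "\<And>j k. j \<in> I \<Longrightarrow> k \<in> I \<Longrightarrow> j \<noteq> k \<Longrightarrow> j \<notin> E \<Longrightarrow> k \<notin> E \<Longrightarrow> e j k = 0"
  shows "(\<Sum>j\<in>I. \<Sum>k\<in>I. e j k) \<le> C * card I * (1 + 2 * card E)"
proof (cases "I = {}")
  case False
  then have C: "0 \<le> C"
    using bound by (meson abs_ge_zero all_not_in_conv order_trans)
  have "e j k \<le> C * (of_bool (j = k) + of_bool (j \<in> E) + of_bool (k \<in> E))"
    if "j \<in> I" "k \<in> I" for j k
    using bound[OF that] zero[OF that] C by (cases "j = k \<or> j \<in> E \<or> k \<in> E") auto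
  then have "(\<Sum>j\<in>I. \<Sum>k\<in>I. e j k) \<le>
      (\<Sum>j\<in>I. \<Sum>k\<in>I. C * (of_bool (j = k) + of_bool (j \<in> E) + of_bool (k \<in> E)))"
    by (intro sum_mono) auto
  also have "\<dots> = C * card I * (1 + 2 * card (I \<inter> E))"
    using I by (simp add: sum.distrib sum_distrib_left[symmetric] algebra_simps Int_def Collect_conv_if)
  also have "\<dots> \<le> C * card I * (1 + 2 * card E)"
    using C E by (intro mult_left_mono) (auto intro: card_mono)
  finally show ?thesis .
qed simp

section \<open>Discrete and independent random variables\<close>

lemma (in prob_space) AE_in_finite_range:
  assumes S: "finite S" and V: "\<And>s. s \<in> S \<Longrightarrow> {\<omega> \<in> space M. V \<omega> = s} \<in> events"
    and total: "(\<Sum>s\<in>S. prob {\<omega> \<in> space M. V \<omega> = s}) = 1"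
  shows "AE \<omega> in M. V \<omega> \<in> S"
proof -
  have eq: "{\<omega> \<in> space M. V \<omega> \<in> S} = (\<Union>s\<in>S. {\<omega> \<in> space M. V \<omega> = s})"
    by auto
  have "prob {\<omega> \<in> space M. V \<omega> \<in> S} = 1"
    unfolding eq using S V total
    by (subst finite_measure_finite_Union) (auto simp: disjoint_family_on_def)
  moreover have "{\<omega> \<in> space M. V \<omega> \<in> S} \<in> events"
    unfolding eq using S V by blast
  ultimately show ?thesis
    by (simp add: prob_Collect_eq_1)
qed

lemma (in prob_space) integral_finite_range:
  fixes V :: "'a \<Rightarrow> real" and \<phi> :: "real \<Rightarrow> real"
  assumes [measurable]: "V \<in> borel_measurable M" "\<phi> \<in> borel_measurable borel"
    and S: "finite S" and range: "AE \<omega> in M. V \<omega> \<in> S"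
  shows "(\<integral>\<omega>. \<phi> (V \<omega>) \<partial>M) = (\<Sum>s\<in>S. \<phi> s * prob {\<omega> \<in> space M. V \<omega> = s})"
proof -
  have "(\<integral>\<omega>. \<phi> (V \<omega>) \<partial>M) = (\<integral>\<omega>. (\<Sum>s\<in>S. \<phi> s * indicator {\<omega> \<in> space M. V \<omega> = s} \<omega>) \<partial>M)"
  proof (rule integral_cong_AE)
    show "AE \<omega> in M. \<phi> (V \<omega>) = (\<Sum>s\<in>S. \<phi> s * indicator {\<omega> \<in> space M. V \<omega> = s} \<omega>)"
      using range AE_space
      by eventually_elim (simp add: indicator_def S if_distrib sum.If_cases Int_absorb1 cong: conj_cong)
  qed simp_all
  also have "\<dots> = (\<Sum>s\<in>S. \<phi> s * prob {\<omega> \<in> space M. V \<omega> = s})"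
    by (subst Bochner_Integration.integral_sum)
      (auto intro!: integrable_real_indicator simp: less_top[symmetric])
  finally show ?thesis .
qed

lemma (in prob_space)
  fixes V :: "'a \<Rightarrow> real"
  assumes [measurable]: "V \<in> borel_measurable M"
    and law: "prob {\<omega> \<in> space M. V \<omega> = 1} = p" "prob {\<omega> \<in> space M. V \<omega> = -1} = q"
      "prob {\<omega> \<in> space M. V \<omega> = 0} = r"
    and total: "p + q + r = 1"
  shows AE_three_point: "AE \<omega> in M. V \<omega> \<in> {-1, 0, 1}"
    and integral_three_point:
      "\<phi> \<in> borel_measurable borel \<Longrightarrow> (\<integral>\<omega>. \<phi> (V \<omega>) \<partial>M) = p * \<phi> 1 + q * \<phi> (-1) + r * \<phi> 0"
proof -
  show AE: "AE \<omega> in M. V \<omega> \<in> {-1, 0, 1}"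
    by (rule AE_in_finite_range) (use law total in auto)
  show "(\<integral>\<omega>. \<phi> (V \<omega>) \<partial>M) = p * \<phi> 1 + q * \<phi> (-1) + r * \<phi> 0"
    if "\<phi> \<in> borel_measurable borel"
    using integral_finite_range[OF _ that _ AE] law by (simp add: algebra_simps)
qed

lemma (in prob_space) indep_var_restrict_compose:
  assumes "indep_vars (\<lambda>_. M') X I" "A \<inter> B = {}" "A \<subseteq> I" "B \<subseteq> I"
    and "f \<in> measurable (Pi\<^sub>M A (\<lambda>_. M')) N" "g \<in> measurable (Pi\<^sub>M B (\<lambda>_. M')) N'"
  shows "indep_var N (\<lambda>\<omega>. f (restrict (\<lambda>i. X i \<omega>) A)) N' (\<lambda>\<omega>. g (restrict (\<lambda>i. X i \<omega>) B))"
  using indep_var_compose[OF indep_var_restrict[OF assms(1-4)] assms(5,6)] by (simp add: comp_def)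

lemma (in prob_space) integral_indep_var_iterated:
  fixes h :: "'b \<Rightarrow> 'b \<Rightarrow> real"
  assumes ind: "indep_var S X T Y"
    and [measurable]: "(\<lambda>(x, y). h x y) \<in> borel_measurable (S \<Otimes>\<^sub>M T)"
    and int: "integrable M (\<lambda>\<omega>. h (X \<omega>) (Y \<omega>))"
  shows "(\<integral>\<omega>. h (X \<omega>) (Y \<omega>) \<partial>M) = (\<integral>\<omega>. (\<integral>\<omega>'. h (X \<omega>) (Y \<omega>') \<partial>M) \<partial>M)"
proof -
  have [measurable]: "X \<in> measurable M S" "Y \<in> measurable M T"
    using ind by (auto dest: indep_var_rv1 indep_var_rv2)
  interpret S: prob_space "distr M S X" by (rule prob_space_distr) simp
  interpret T: prob_space "distr M T Y" by (rule prob_space_distr) simp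
  interpret ST: pair_prob_space "distr M S X" "distr M T Y" ..
  have joint: "distr M S X \<Otimes>\<^sub>M distr M T Y = distr M (S \<Otimes>\<^sub>M T) (\<lambda>\<omega>. (X \<omega>, Y \<omega>))"
    using ind by (simp add: indep_var_distribution_eq)
  have int_joint: "integrable (distr M S X \<Otimes>\<^sub>M distr M T Y) (\<lambda>(x, y). h x y)"
    unfolding joint using int by (subst integrable_distr_eq) auto
  have "(\<integral>\<omega>. h (X \<omega>) (Y \<omega>) \<partial>M) = integral\<^sup>L (distr M S X \<Otimes>\<^sub>M distr M T Y) (\<lambda>(x, y). h x y)"
    unfolding joint by (subst integral_distr) auto
  also have "\<dots> = (\<integral>x. (\<integral>y. h x y \<partial>distr M T Y) \<partial>distr M S X)"
    by (rule ST.integral_fst[OF int_joint, symmetric])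
  also have "\<dots> = (\<integral>\<omega>. (\<integral>y. h (X \<omega>) y \<partial>distr M T Y) \<partial>M)"
    by (rule integral_distr) (auto intro!: T.borel_measurable_lebesgue_integral)
  also have "\<dots> = (\<integral>\<omega>. (\<integral>\<omega>'. h (X \<omega>) (Y \<omega>') \<partial>M) \<partial>M)"
    by (intro Bochner_Integration.integral_cong refl integral_distr)
       (auto intro!: measurable_Pair2' measurable_space[of X M S])
  finally show ?thesis .
qed

section \<open>Mean-square convergence\<close>

lemma (in prob_space) abs_expectation_le_sqrt:
  fixes f :: "'a \<Rightarrow> real"
  assumes "integrable M f" "integrable M (\<lambda>\<omega>. (f \<omega>)\<^sup>2)"
  shows "\<bar>expectation f\<bar> \<le> sqrt (expectation (\<lambda>\<omega>. (f \<omega>)\<^sup>2))"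
  using variance_positive[of f] variance_eq[OF assms] by (simp add: real_le_rsqrt)

lemma (in prob_space) tendsto_expectation_mult_of_L2:
  fixes D :: "nat \<Rightarrow> 'a \<Rightarrow> real" and g :: "'a \<Rightarrow> real"
  assumes [measurable]: "\<And>n. D n \<in> borel_measurable M" "g \<in> borel_measurable M"
    and int: "\<And>n. integrable M (\<lambda>\<omega>. (D n \<omega>)\<^sup>2)"
    and L2: "(\<lambda>n. expectation (\<lambda>\<omega>. (D n \<omega>)\<^sup>2)) \<longlonglongrightarrow> 0"
    and g: "AE \<omega> in M. \<bar>g \<omega>\<bar> \<le> C"
  shows "(\<lambda>n. expectation (\<lambda>\<omega>. D n \<omega> * g \<omega>)) \<longlonglongrightarrow> 0"
proof (rule Lim_null_comparison)
  have "AE \<omega> in M. 0 \<le> C"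
    using g by eventually_elim (rule order_trans[OF abs_ge_zero])
  then have C: "0 \<le> C"
    by simp
  show "(\<lambda>n. C * sqrt (expectation (\<lambda>\<omega>. (D n \<omega>)\<^sup>2))) \<longlonglongrightarrow> 0"
    using tendsto_mult_right_zero[OF tendsto_real_sqrt[OF L2, unfolded real_sqrt_zero]] .
  show "\<forall>\<^sub>F n in sequentially.
      norm (expectation (\<lambda>\<omega>. D n \<omega> * g \<omega>)) \<le> C * sqrt (expectation (\<lambda>\<omega>. (D n \<omega>)\<^sup>2))"
  proof (rule always_eventually, intro allI)
    fix n
    have le: "AE \<omega> in M. (D n \<omega> * g \<omega>)\<^sup>2 \<le> C\<^sup>2 * (D n \<omega>)\<^sup>2"
      using g by eventually_elim
        (simp add: power_mult_distrib mult.commute mult_right_mono power2_le_iff_abs_le[OF C])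
    have int_Dg2: "integrable M (\<lambda>\<omega>. (D n \<omega> * g \<omega>)\<^sup>2)"
    proof (rule Bochner_Integration.integrable_bound[OF integrable_mult_right[OF int[of n], of "C\<^sup>2"]])
      show "AE \<omega> in M. norm ((D n \<omega> * g \<omega>)\<^sup>2) \<le> norm (C\<^sup>2 * (D n \<omega>)\<^sup>2)"
        using le by eventually_elim simp
    qed simp
    have int_Dg: "integrable M (\<lambda>\<omega>. D n \<omega> * g \<omega>)"
      by (rule square_integrable_imp_integrable[OF _ int_Dg2]) simp
    have "\<bar>expectation (\<lambda>\<omega>. D n \<omega> * g \<omega>)\<bar> \<le> sqrt (expectation (\<lambda>\<omega>. (D n \<omega> * g \<omega>)\<^sup>2))"
      by (rule abs_expectation_le_sqrt[OF int_Dg int_Dg2])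
    also have "\<dots> \<le> sqrt (expectation (\<lambda>\<omega>. C\<^sup>2 * (D n \<omega>)\<^sup>2))"
      using le int_Dg2 int by (intro real_sqrt_le_mono integral_mono_AE) auto
    also have "\<dots> = C * sqrt (expectation (\<lambda>\<omega>. (D n \<omega>)\<^sup>2))"
      using C by (simp add: real_sqrt_mult)
    finally show "norm (expectation (\<lambda>\<omega>. D n \<omega> * g \<omega>)) \<le> C * sqrt (expectation (\<lambda>\<omega>. (D n \<omega>)\<^sup>2))"
      by simp
  qed
qed

lemma (in prob_space)
  fixes Y :: "nat \<Rightarrow> 'a \<Rightarrow> real" and L :: "'a \<Rightarrow> real" and B :: real
  assumes Y_measurable[measurable]: "\<And>n. Y n \<in> borel_measurable M"
    and L_measurable[measurable]: "L \<in> borel_measurable M"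
    and Y_bounded: "\<And>n. AE \<omega> in M. \<bar>Y n \<omega>\<bar> \<le> B" and L_bounded: "AE \<omega> in M. \<bar>L \<omega>\<bar> \<le> B"
    and L2: "(\<lambda>n. expectation (\<lambda>\<omega>. (Y n \<omega> - L \<omega>)\<^sup>2)) \<longlonglongrightarrow> 0"
  shows tendsto_expectation_of_L2: "(\<lambda>n. expectation (Y n)) \<longlonglongrightarrow> expectation L"
    and tendsto_variance_of_L2: "(\<lambda>n. variance (Y n)) \<longlonglongrightarrow> variance L"
proof -
  have square_int: "integrable M f" "integrable M (\<lambda>\<omega>. (f \<omega>)\<^sup>2)"
    if [measurable]: "f \<in> borel_measurable M" and f: "AE \<omega> in M. \<bar>f \<omega>\<bar> \<le> C" for f :: "'a \<Rightarrow> real" and C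
  proof -
    have "AE \<omega> in M. 0 \<le> C"
      using f by eventually_elim (rule order_trans[OF abs_ge_zero])
    then have C: "0 \<le> C"
      by simp
    have "AE \<omega> in M. \<bar>(f \<omega>)\<^sup>2\<bar> \<le> C\<^sup>2"
      using f by eventually_elim (simp add: power2_le_iff_abs_le[OF C])
    then show "integrable M (\<lambda>\<omega>. (f \<omega>)\<^sup>2)"
      by (intro integrable_const_bound[of _ "C\<^sup>2"]) simp_all
    show "integrable M f"
      using f by (intro integrable_const_bound[of _ C]) simp_all
  qed
  have D_bounded: "AE \<omega> in M. \<bar>Y n \<omega> - L \<omega>\<bar> \<le> 2 * B" for n
    using Y_bounded[of n] L_bounded by eventually_elim linarith
  have D_measurable: "(\<lambda>\<omega>. Y n \<omega> - L \<omega>) \<in> borel_measurable M" for n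
    by measurable
  note int_Y = square_int[OF Y_measurable Y_bounded] and int_L = square_int[OF L_measurable L_bounded]
    and int_D = square_int[OF D_measurable D_bounded]
  note deviation =
    tendsto_expectation_mult_of_L2[where D = "\<lambda>n \<omega>. Y n \<omega> - L \<omega>", OF D_measurable _ int_D(2) L2]
  have "(\<lambda>n. expectation L + expectation (\<lambda>\<omega>. (Y n \<omega> - L \<omega>) * 1)) \<longlonglongrightarrow> expectation L + 0"
    by (intro tendsto_add tendsto_const deviation[of "\<lambda>_. 1" 1]) simp_all
  then show mean: "(\<lambda>n. expectation (Y n)) \<longlonglongrightarrow> expectation L"
    using int_Y int_L by simp
  have "expectation (\<lambda>\<omega>. (Y n \<omega>)\<^sup>2) = expectation (\<lambda>\<omega>. (L \<omega>)\<^sup>2)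
      + 2 * expectation (\<lambda>\<omega>. (Y n \<omega> - L \<omega>) * L \<omega>) + expectation (\<lambda>\<omega>. (Y n \<omega> - L \<omega>)\<^sup>2)" for n
  proof -
    have "AE \<omega> in M. \<bar>(Y n \<omega> - L \<omega>) * L \<omega>\<bar> \<le> 2 * B * B"
      using D_bounded[of n] L_bounded by eventually_elim (simp add: abs_mult mult_mono)
    then have "integrable M (\<lambda>\<omega>. (Y n \<omega> - L \<omega>) * L \<omega>)"
      by (rule square_int(1)[rotated]) measurable
    moreover have "expectation (\<lambda>\<omega>. (Y n \<omega>)\<^sup>2) =
        expectation (\<lambda>\<omega>. (L \<omega>)\<^sup>2 + 2 * ((Y n \<omega> - L \<omega>) * L \<omega>) + (Y n \<omega> - L \<omega>)\<^sup>2)"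
      by (rule Bochner_Integration.integral_cong) (simp_all add: power2_eq_square algebra_simps)
    ultimately show ?thesis
      using int_L int_D by simp
  qed
  moreover have "(\<lambda>n. expectation (\<lambda>\<omega>. (L \<omega>)\<^sup>2) + 2 * expectation (\<lambda>\<omega>. (Y n \<omega> - L \<omega>) * L \<omega>)
      + expectation (\<lambda>\<omega>. (Y n \<omega> - L \<omega>)\<^sup>2)) \<longlonglongrightarrow> expectation (\<lambda>\<omega>. (L \<omega>)\<^sup>2) + 2 * 0 + 0"
    by (intro tendsto_add tendsto_mult tendsto_const deviation[OF L_measurable L_bounded] L2)
  ultimately have "(\<lambda>n. expectation (\<lambda>\<omega>. (Y n \<omega>)\<^sup>2)) \<longlonglongrightarrow> expectation (\<lambda>\<omega>. (L \<omega>)\<^sup>2)"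
    by simp
  then show "(\<lambda>n. variance (Y n)) \<longlonglongrightarrow> variance L"
    unfolding variance_eq[OF int_Y] variance_eq[OF int_L] by (intro tendsto_diff tendsto_power mean)
qed

lemma (in prob_space) tendsto_prob_deviation_of_L2:
  fixes Y :: "nat \<Rightarrow> 'a \<Rightarrow> real" and L :: "'a \<Rightarrow> real"
  assumes [measurable]: "\<And>n. Y n \<in> borel_measurable M" "L \<in> borel_measurable M"
    and int: "\<And>n. integrable M (\<lambda>\<omega>. (Y n \<omega> - L \<omega>)\<^sup>2)"
    and L2: "(\<lambda>n. expectation (\<lambda>\<omega>. (Y n \<omega> - L \<omega>)\<^sup>2)) \<longlonglongrightarrow> 0" and "0 < \<epsilon>"
  shows "(\<lambda>n. prob {\<omega> \<in> space M. \<epsilon> \<le> \<bar>Y n \<omega> - L \<omega>\<bar>}) \<longlonglongrightarrow> 0"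
proof (rule Lim_null_comparison)
  show "\<forall>\<^sub>F n in sequentially. norm (prob {\<omega> \<in> space M. \<epsilon> \<le> \<bar>Y n \<omega> - L \<omega>\<bar>})
      \<le> expectation (\<lambda>\<omega>. (Y n \<omega> - L \<omega>)\<^sup>2) / \<epsilon>\<^sup>2"
    using second_moment_method[OF _ int \<open>0 < \<epsilon>\<close>] by simp
  show "(\<lambda>n. expectation (\<lambda>\<omega>. (Y n \<omega> - L \<omega>)\<^sup>2) / \<epsilon>\<^sup>2) \<longlonglongrightarrow> 0"
    using tendsto_divide_zero[OF L2] .
qed

lemma (in prob_space) weak_conv_m_of_tendsto_in_prob:
  fixes Y :: "nat \<Rightarrow> 'a \<Rightarrow> real" and L :: "'a \<Rightarrow> real" and \<mu> :: "real measure"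
  assumes [measurable]: "\<And>n. Y n \<in> borel_measurable M" "L \<in> borel_measurable M"
    and in_prob: "\<And>\<epsilon>. 0 < \<epsilon> \<Longrightarrow> (\<lambda>n. prob {\<omega> \<in> space M. \<epsilon> \<le> \<bar>Y n \<omega> - L \<omega>\<bar>}) \<longlonglongrightarrow> 0"
    and cdf: "\<And>x. measure \<mu> {..x} = prob {\<omega> \<in> space M. L \<omega> \<le> x}"
  shows "weak_conv_m (\<lambda>n. distr M borel (Y n)) \<mu>"
  unfolding weak_conv_m_def weak_conv_def cdf_def
proof (intro allI impI)
  fix x assume "isCont (\<lambda>x. measure \<mu> {..x}) x"
  then have cont: "isCont (\<lambda>z. prob {\<omega> \<in> space M. L \<omega> \<le> z}) x"
    by (simp add: cdf)
  have distr: "measure (distr M borel (Y n)) {..x} = prob {\<omega> \<in> space M. Y n \<omega> \<le> x}" for n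
    by (subst measure_distr) (auto intro!: arg_cong[where f=prob])
  show "(\<lambda>n. measure (distr M borel (Y n)) {..x}) \<longlonglongrightarrow> measure \<mu> {..x}"
    unfolding distr cdf
  proof (rule tendstoI)
    fix e :: real assume "0 < e"
    then obtain \<delta> where "0 < \<delta>" and \<delta>:
      "\<And>z. \<bar>z - x\<bar> \<le> \<delta> \<Longrightarrow> \<bar>prob {\<omega> \<in> space M. L \<omega> \<le> z} - prob {\<omega> \<in> space M. L \<omega> \<le> x}\<bar> < e / 2"
    proof -
      obtain s where "0 < s" and s: "\<And>z. z \<noteq> x \<Longrightarrow> \<bar>z - x\<bar> < s \<Longrightarrow>
          \<bar>prob {\<omega> \<in> space M. L \<omega> \<le> z} - prob {\<omega> \<in> space M. L \<omega> \<le> x}\<bar> < e / 2"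
        using cont[unfolded isCont_def LIM_eq, rule_format, of "e / 2"] \<open>0 < e\<close> by auto
      show ?thesis
      proof (rule that[of "s / 2"])
        show "0 < s / 2" using \<open>0 < s\<close> by simp
        fix z assume "\<bar>z - x\<bar> \<le> s / 2"
        then show "\<bar>prob {\<omega> \<in> space M. L \<omega> \<le> z} - prob {\<omega> \<in> space M. L \<omega> \<le> x}\<bar> < e / 2"
          using s[of z] \<open>0 < s\<close> \<open>0 < e\<close> by (cases "z = x") auto
      qed
    qed
    have dev: "\<forall>\<^sub>F n in sequentially. prob {\<omega> \<in> space M. \<delta> \<le> \<bar>Y n \<omega> - L \<omega>\<bar>} < e / 2"
      by (rule order_tendstoD(2)[OF in_prob[OF \<open>0 < \<delta>\<close>]]) (use \<open>0 < e\<close> in simp)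
    then show "\<forall>\<^sub>F n in sequentially.
        dist (prob {\<omega> \<in> space M. Y n \<omega> \<le> x}) (prob {\<omega> \<in> space M. L \<omega> \<le> x}) < e"
    proof eventually_elim
      case (elim n)
      have "prob {\<omega> \<in> space M. Y n \<omega> \<le> x}
          \<le> prob ({\<omega> \<in> space M. L \<omega> \<le> x + \<delta>} \<union> {\<omega> \<in> space M. \<delta> \<le> \<bar>Y n \<omega> - L \<omega>\<bar>})"
        by (rule finite_measure_mono) auto
      also have "\<dots> \<le> prob {\<omega> \<in> space M. L \<omega> \<le> x + \<delta>} + prob {\<omega> \<in> space M. \<delta> \<le> \<bar>Y n \<omega> - L \<omega>\<bar>}"
        by (rule measure_Un_le) auto
      finally have upper: "prob {\<omega> \<in> space M. Y n \<omega> \<le> x}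
          \<le> prob {\<omega> \<in> space M. L \<omega> \<le> x + \<delta>} + prob {\<omega> \<in> space M. \<delta> \<le> \<bar>Y n \<omega> - L \<omega>\<bar>}" .
      have "prob {\<omega> \<in> space M. L \<omega> \<le> x - \<delta>}
          \<le> prob ({\<omega> \<in> space M. Y n \<omega> \<le> x} \<union> {\<omega> \<in> space M. \<delta> \<le> \<bar>Y n \<omega> - L \<omega>\<bar>})"
        by (rule finite_measure_mono) auto
      also have "\<dots> \<le> prob {\<omega> \<in> space M. Y n \<omega> \<le> x} + prob {\<omega> \<in> space M. \<delta> \<le> \<bar>Y n \<omega> - L \<omega>\<bar>}"
        by (rule measure_Un_le) auto
      finally have lower: "prob {\<omega> \<in> space M. L \<omega> \<le> x - \<delta>}
          \<le> prob {\<omega> \<in> space M. Y n \<omega> \<le> x} + prob {\<omega> \<in> space M. \<delta> \<le> \<bar>Y n \<omega> - L \<omega>\<bar>}" .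
      show ?case
        using upper lower elim \<delta>[of "x + \<delta>"] \<delta>[of "x - \<delta>"] \<open>0 < \<delta>\<close>
        unfolding dist_real_def by linarith
    qed
  qed
qed

section \<open>The walk remembering its first two steps\<close>

locale erw_two_memory = prob_space M for M :: "'a measure" +
  fixes X1 :: "'a \<Rightarrow> real" and \<eta> :: "nat \<Rightarrow> 'a \<Rightarrow> real" and K :: "nat \<Rightarrow> 'a \<Rightarrow> nat"
    and p q r :: real
  assumes total: "p + q + r = 1"
    and X1_law: "prob {\<omega> \<in> space M. X1 \<omega> = 1} = p" "prob {\<omega> \<in> space M. X1 \<omega> = -1} = q"
      "prob {\<omega> \<in> space M. X1 \<omega> = 0} = r"
    and eta_law: "\<And>n. 2 \<le> n \<Longrightarrow> prob {\<omega> \<in> space M. \<eta> n \<omega> = 1} = p"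
      "\<And>n. 2 \<le> n \<Longrightarrow> prob {\<omega> \<in> space M. \<eta> n \<omega> = -1} = q"
      "\<And>n. 2 \<le> n \<Longrightarrow> prob {\<omega> \<in> space M. \<eta> n \<omega> = 0} = r"
    and K_law: "\<And>n. 3 \<le> n \<Longrightarrow> prob {\<omega> \<in> space M. K n \<omega> = 1} = 1 / 2"
    and indep: "indep_vars (\<lambda>_. borel) (erw_family X1 \<eta> K) erw_index"
begin

abbreviation block :: "(nat + nat) set \<Rightarrow> 'a \<Rightarrow> nat + nat \<Rightarrow> real" where
  "block J \<omega> \<equiv> restrict (\<lambda>i. erw_family X1 \<eta> K i \<omega>) J"

lemma family_measurable: "i \<in> erw_index \<Longrightarrow> erw_family X1 \<eta> K i \<in> borel_measurable M"
  using indep by (auto simp: indep_vars_def)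

lemma X1_measurable[measurable]: "X1 \<in> borel_measurable M"
  using family_measurable[of "Inl 1"] by (simp add: erw_index_def erw_family_def)

lemma eta_measurable: "2 \<le> n \<Longrightarrow> \<eta> n \<in> borel_measurable M"
  using family_measurable[of "Inl n"] by (simp add: erw_index_def erw_family_def)

lemma eta2_measurable[measurable]: "\<eta> 2 \<in> borel_measurable M"
  by (simp add: eta_measurable)

lemma K_measurable: "3 \<le> n \<Longrightarrow> (\<lambda>\<omega>. real (K n \<omega>)) \<in> borel_measurable M"
  using family_measurable[of "Inr n"] by (simp add: erw_index_def erw_family_def)

lemma X_measurable[measurable]: "erw_X X1 \<eta> K k \<in> borel_measurable M"
proof (cases "3 \<le> k")
  case True
  have [measurable]: "\<eta> k \<in> borel_measurable M" "(\<lambda>\<omega>. real (K k \<omega>)) \<in> borel_measurable M"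
    using True by (simp_all add: eta_measurable K_measurable)
  have eq: "erw_X X1 \<eta> K k =
      (\<lambda>\<omega>. \<eta> k \<omega> * (if real (K k \<omega>) = 1 then X1 \<omega> else \<eta> 2 \<omega> * X1 \<omega>))"
    using True by (auto simp: erw_X_def fun_eq_iff)
  show ?thesis unfolding eq by measurable
next
  case False
  then have "k = 0 \<or> k = 1 \<or> k = 2" by auto
  then show ?thesis by (auto simp: erw_X_def[abs_def])
qed

lemma eta_law_at:
  assumes "2 \<le> n"
  shows "prob {\<omega> \<in> space M. \<eta> n \<omega> = 1} = p" "prob {\<omega> \<in> space M. \<eta> n \<omega> = -1} = q"
    "prob {\<omega> \<in> space M. \<eta> n \<omega> = 0} = r" "\<eta> n \<in> borel_measurable M"
  using eta_law eta_measurable assms by auto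

lemma law_nonneg: "0 \<le> p" "0 \<le> q" "0 \<le> r"
  using X1_law measure_nonneg by metis+

lemma AE_abs_le_1: "AE \<omega> in M. \<bar>X1 \<omega>\<bar> \<le> 1 \<and> (\<forall>n\<ge>2. \<bar>\<eta> n \<omega>\<bar> \<le> 1)"
proof -
  have "AE \<omega> in M. X1 \<omega> \<in> {-1, 0, 1}"
    by (rule AE_three_point[OF X1_measurable X1_law total])
  moreover have "AE \<omega> in M. \<forall>n. 2 \<le> n \<longrightarrow> \<eta> n \<omega> \<in> {-1, 0, 1}"
  proof (subst AE_all_countable, intro allI)
    fix n
    show "AE \<omega> in M. 2 \<le> n \<longrightarrow> \<eta> n \<omega> \<in> {-1, 0, 1}"
      using AE_three_point[OF eta_law_at(4) eta_law_at(1-3) total] by (cases "2 \<le> n") auto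
  qed
  ultimately show ?thesis
    by eventually_elim auto
qed

lemma AE_abs_X_le_1: "AE \<omega> in M. \<bar>erw_X X1 \<eta> K k \<omega>\<bar> \<le> 1"
  using AE_abs_le_1 by eventually_elim (auto simp: erw_X_def abs_mult intro!: mult_le_one)

lemma
  fixes c1 c2 :: real
  assumes "3 \<le> j"
  shows integral_K_choice: "expectation (\<lambda>\<omega>. if K j \<omega> = 1 then c1 else c2) = (c1 + c2) / 2"
    and integrable_K_choice: "integrable M (\<lambda>\<omega>. if K j \<omega> = 1 then c1 else c2)"
proof -
  have "{\<omega> \<in> space M. real (K j \<omega>) = 1} \<in> events"
    using K_measurable[OF assms] by measurable
  then have K_event: "{\<omega> \<in> space M. K j \<omega> = 1} \<in> events"
    by simp
  then have [measurable]: "Measurable.pred M (\<lambda>\<omega>. K j \<omega> = 1)"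
    by (simp add: pred_def)
  show "integrable M (\<lambda>\<omega>. if K j \<omega> = 1 then c1 else c2)"
  proof (rule integrable_const_bound[of _ "\<bar>c1\<bar> + \<bar>c2\<bar>"])
    show "(\<lambda>\<omega>. if K j \<omega> = 1 then c1 else c2) \<in> borel_measurable M"
      by measurable
  qed auto
  have "expectation (\<lambda>\<omega>. if K j \<omega> = 1 then c1 else c2) =
      expectation (\<lambda>\<omega>. c2 + (c1 - c2) * indicator {\<omega> \<in> space M. K j \<omega> = 1} \<omega>)"
    by (rule Bochner_Integration.integral_cong) (auto simp: indicator_def)
  also have "\<dots> = (c1 + c2) / 2"
    using K_event K_law[OF assms] by (simp add: prob_space less_top[symmetric] mult.assoc)
  finally show "expectation (\<lambda>\<omega>. if K j \<omega> = 1 then c1 else c2) = (c1 + c2) / 2" .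
qed

lemma
  fixes c1 c2 :: real
  assumes "3 \<le> j"
  shows integral_eta_choice:
      "expectation (\<lambda>\<omega>. \<eta> j \<omega> * (if K j \<omega> = 1 then c1 else c2)) = (p - q) * (c1 + c2) / 2"
    and integrable_eta_choice: "integrable M (\<lambda>\<omega>. \<eta> j \<omega> * (if K j \<omega> = 1 then c1 else c2))"
proof -
  have [measurable]: "\<eta> j \<in> borel_measurable M" "(\<lambda>\<omega>. real (K j \<omega>)) \<in> borel_measurable M"
    using assms by (simp_all add: eta_measurable K_measurable)
  have "indep_var borel (\<lambda>\<omega>. block {Inl j} \<omega> (Inl j))
      borel (\<lambda>\<omega>. if block {Inr j} \<omega> (Inr j) = 1 then c1 else c2)"
    by (rule indep_var_restrict_compose[OF indep]) (use assms in \<open>auto simp: erw_index_def\<close>)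
  then have ind: "indep_var borel (\<eta> j) borel (\<lambda>\<omega>. if K j \<omega> = 1 then c1 else c2)"
    using assms by (simp add: erw_family_def)
  have "AE \<omega> in M. \<bar>\<eta> j \<omega>\<bar> \<le> 1"
    using AE_abs_le_1 by eventually_elim (use assms in auto)
  then have int_eta: "integrable M (\<eta> j)"
    by (intro integrable_const_bound[of _ 1]) auto
  have "expectation (\<eta> j) = p - q"
    using integral_three_point[OF eta_law_at(4) eta_law_at(1-3) total, of j "\<lambda>x. x"] assms
    by simp
  then show "expectation (\<lambda>\<omega>. \<eta> j \<omega> * (if K j \<omega> = 1 then c1 else c2)) = (p - q) * (c1 + c2) / 2"
    and "integrable M (\<lambda>\<omega>. \<eta> j \<omega> * (if K j \<omega> = 1 then c1 else c2))"
    using indep_var_lebesgue_integral[OF ind int_eta] indep_var_integrable[OF ind int_eta]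
      integral_K_choice[OF assms] integrable_K_choice[OF assms]
    by simp_all
qed

text \<open>The conditional mean of \<open>X\<^sub>k\<close>, \<open>k \<ge> 3\<close>, given \<open>X\<^sub>1\<close> and \<open>\<eta>\<^sub>2\<close>; it is the limit of \<open>S\<^sub>n / n\<close>.\<close>

definition L :: "'a \<Rightarrow> real" where
  "L \<omega> = (p - q) * X1 \<omega> * (1 + \<eta> 2 \<omega>) / 2"

definition Z :: "nat \<Rightarrow> 'a \<Rightarrow> real" where
  "Z k \<omega> = erw_X X1 \<eta> K k \<omega> - L \<omega>"

lemma L_measurable[measurable]: "L \<in> borel_measurable M"
  unfolding L_def[abs_def] by measurable

lemma Z_measurable[measurable]: "Z k \<in> borel_measurable M"
  unfolding Z_def[abs_def] by measurable

lemma AE_abs_L_le_1: "AE \<omega> in M. \<bar>L \<omega>\<bar> \<le> 1"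
proof -
  have pq: "\<bar>p - q\<bar> \<le> 1"
    using law_nonneg total by (auto simp: abs_if)
  show ?thesis
    using AE_abs_le_1
  proof eventually_elim
    case (elim \<omega>)
    then have "\<bar>X1 \<omega>\<bar> \<le> 1" "\<bar>1 + \<eta> 2 \<omega>\<bar> \<le> 2"
      by auto
    then have "\<bar>p - q\<bar> * \<bar>X1 \<omega>\<bar> * \<bar>1 + \<eta> 2 \<omega>\<bar> \<le> 1 * 1 * 2"
      using pq by (intro mult_mono) auto
    then show ?case
      by (simp add: L_def abs_mult)
  qed
qed

lemma AE_abs_Z_le_2: "AE \<omega> in M. \<bar>Z k \<omega>\<bar> \<le> 2"
  using AE_abs_X_le_1[of k] AE_abs_L_le_1 by eventually_elim (simp add: Z_def)

lemma AE_abs_Z_mult_Z_le_4: "AE \<omega> in M. \<bar>Z j \<omega> * Z k \<omega>\<bar> \<le> 4"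
  using AE_abs_Z_le_2[of j] AE_abs_Z_le_2[of k]
proof eventually_elim
  case (elim \<omega>)
  then show ?case
    using mult_mono[of "\<bar>Z j \<omega>\<bar>" 2 "\<bar>Z k \<omega>\<bar>" 2] by (simp add: abs_mult)
qed

text \<open>\<open>centred_step i a b\<close> is \<open>Z\<^sub>i\<close> as a function of the first two steps, read off \<open>a\<close>
  at \<open>Inl 1\<close> and \<open>Inl 2\<close>, and of \<open>(\<eta>\<^sub>i, K\<^sub>i)\<close>, read off \<open>b\<close> at \<open>Inl i\<close> and \<open>Inr i\<close>.\<close>

definition centred_step :: "nat \<Rightarrow> (nat + nat \<Rightarrow> real) \<Rightarrow> (nat + nat \<Rightarrow> real) \<Rightarrow> real" where
  "centred_step i a b =
     b (Inl i) * (if b (Inr i) = 1 then a (Inl 1) else a (Inl 2) * a (Inl 1))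
     - (p - q) * a (Inl 1) * (1 + a (Inl 2)) / 2"

lemma centred_step_block:
  assumes "3 \<le> i" "Inl i \<in> J" "Inr i \<in> J"
  shows "centred_step i a (block J \<omega>) =
    \<eta> i \<omega> * (if K i \<omega> = 1 then a (Inl 1) else a (Inl 2) * a (Inl 1))
    - (p - q) * a (Inl 1) * (1 + a (Inl 2)) / 2"
  using assms by (simp add: centred_step_def erw_family_def)

lemma Z_eq_centred_step:
  assumes "3 \<le> i" "Inl i \<in> J" "Inr i \<in> J"
  shows "Z i \<omega> = centred_step i (block {Inl 1, Inl 2} \<omega>) (block J \<omega>)"
  unfolding centred_step_block[OF assms] using assms by (simp add: Z_def L_def erw_X_def erw_family_def)

lemma
  assumes "3 \<le> i" "Inl i \<in> J" "Inr i \<in> J"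
  shows integral_centred_step: "expectation (\<lambda>\<omega>. centred_step i a (block J \<omega>)) = 0"
    and integrable_centred_step: "integrable M (\<lambda>\<omega>. centred_step i a (block J \<omega>))"
  using integral_eta_choice[OF assms(1), of "a (Inl 1)" "a (Inl 2) * a (Inl 1)"]
    integrable_eta_choice[OF assms(1), of "a (Inl 1)" "a (Inl 2) * a (Inl 1)"]
  by (simp_all add: centred_step_block[OF assms] prob_space algebra_simps)

lemma integral_centred_step_mult:
  assumes jk: "3 \<le> j" "3 \<le> k" "j \<noteq> k" and C: "C = {Inl j, Inr j, Inl k, Inr k}"
  shows "expectation (\<lambda>\<omega>. centred_step j a (block C \<omega>) * centred_step k a (block C \<omega>)) = 0"
proof -
  have "indep_var borel (\<lambda>\<omega>. centred_step j a (block {Inl j, Inr j} \<omega>))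
      borel (\<lambda>\<omega>. centred_step k a (block {Inl k, Inr k} \<omega>))"
    by (rule indep_var_restrict_compose[OF indep])
      (use jk in \<open>auto simp: erw_index_def centred_step_def\<close>)
  then have "indep_var borel (\<lambda>\<omega>. centred_step j a (block C \<omega>)) borel (\<lambda>\<omega>. centred_step k a (block C \<omega>))"
    using jk by (simp add: C centred_step_block)
  moreover have "expectation (\<lambda>\<omega>. centred_step i a (block C \<omega>)) = 0"
    and "integrable M (\<lambda>\<omega>. centred_step i a (block C \<omega>))" if "i \<in> {j, k}" for i
    using that jk integral_centred_step[of i C] integrable_centred_step[of i C] by (auto simp: C)
  ultimately show ?thesis
    by (simp add: indep_var_lebesgue_integral)
qed

lemma integral_Z_mult_Z:
  assumes jk: "3 \<le> j" "3 \<le> k" "j \<noteq> k"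
  shows "expectation (\<lambda>\<omega>. Z j \<omega> * Z k \<omega>) = 0"
proof -
  define A :: "(nat + nat) set" where "A = {Inl 1, Inl 2}"
  define C where "C = {Inl j, Inr j, Inl k, Inr k}"
  define h where "h a b = centred_step j a b * centred_step k a b" for a b
  have Z_eq: "Z j \<omega> * Z k \<omega> = h (block A \<omega>) (block C \<omega>)" for \<omega>
    using Z_eq_centred_step[of j C \<omega>] Z_eq_centred_step[of k C \<omega>] jk by (simp add: h_def A_def C_def)
  txt \<open>Condition on the first two steps; the inner expectation vanishes.\<close>
  have "expectation (\<lambda>\<omega>. h (block A \<omega>) (block C \<omega>)) =
      expectation (\<lambda>\<omega>. expectation (\<lambda>\<omega>'. h (block A \<omega>) (block C \<omega>')))"
  proof (rule integral_indep_var_iterated[where X = "block A" and Y = "block C" and h = h])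
    show "indep_var (Pi\<^sub>M A (\<lambda>_. borel)) (block A) (Pi\<^sub>M C (\<lambda>_. borel)) (block C)"
      using indep_var_restrict[OF indep, of A C] jk by (auto simp: A_def C_def erw_index_def)
    show "(\<lambda>(a, b). h a b) \<in> borel_measurable (Pi\<^sub>M A (\<lambda>_. borel) \<Otimes>\<^sub>M Pi\<^sub>M C (\<lambda>_. borel))"
      unfolding h_def centred_step_def A_def C_def by measurable
    show "integrable M (\<lambda>\<omega>. h (block A \<omega>) (block C \<omega>))"
      using AE_abs_Z_mult_Z_le_4[of j k]
      by (intro integrable_const_bound[of _ 4]) (auto simp: Z_eq[symmetric])
  qed
  also have "\<dots> = 0"
    using integral_centred_step_mult[OF jk C_def] by (simp add: h_def)
  finally show ?thesis
    by (simp add: Z_eq)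
qed

definition Y :: "nat \<Rightarrow> 'a \<Rightarrow> real" where
  "Y n \<omega> = erw_S X1 \<eta> K n \<omega> / real n"

lemma Y_measurable[measurable]: "Y n \<in> borel_measurable M"
  unfolding Y_def[abs_def] erw_S_def by measurable

lemma AE_abs_Y_le_1: "AE \<omega> in M. \<bar>Y n \<omega>\<bar> \<le> 1"
proof -
  have "AE \<omega> in M. \<forall>k. \<bar>erw_X X1 \<eta> K k \<omega>\<bar> \<le> 1"
    using AE_abs_X_le_1 by (simp add: AE_all_countable)
  then show ?thesis
  proof eventually_elim
    case (elim \<omega>)
    have "\<bar>erw_S X1 \<eta> K n \<omega>\<bar> \<le> (\<Sum>k=1..n. \<bar>erw_X X1 \<eta> K k \<omega>\<bar>)"
      unfolding erw_S_def by (rule sum_abs)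
    also have "\<dots> \<le> real n"
      using sum_bounded_above[of "{1..n}" "\<lambda>k. \<bar>erw_X X1 \<eta> K k \<omega>\<bar>" 1] elim by simp
    finally show ?case
      by (cases "n = 0") (simp_all add: Y_def abs_divide divide_le_eq)
  qed
qed

lemma integral_Y_minus_L_squared_le:
  assumes "1 \<le> n"
  shows "expectation (\<lambda>\<omega>. (Y n \<omega> - L \<omega>)\<^sup>2) \<le> 20 / real n"
proof -
  note ZZ_bounded = AE_abs_Z_mult_Z_le_4
  then have ZZ_int: "integrable M (\<lambda>\<omega>. Z j \<omega> * Z k \<omega>)" for j k
    by (intro integrable_const_bound[of _ 4]) auto
  have "\<bar>expectation (\<lambda>\<omega>. Z j \<omega> * Z k \<omega>)\<bar> \<le> 4" for j k
  proof -
    have "\<bar>expectation (\<lambda>\<omega>. Z j \<omega> * Z k \<omega>)\<bar> \<le> expectation (\<lambda>\<omega>. \<bar>Z j \<omega> * Z k \<omega>\<bar>)"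
      by (rule integral_abs_bound)
    also have "\<dots> \<le> expectation (\<lambda>\<omega>. 4)"
      using ZZ_bounded ZZ_int by (intro integral_mono_AE) auto
    finally show ?thesis by (simp add: prob_space)
  qed
  then have "(\<Sum>j\<in>{1..n}. \<Sum>k\<in>{1..n}. expectation (\<lambda>\<omega>. Z j \<omega> * Z k \<omega>)) \<le> 20 * real n"
    using sum_sum_le_of_sparse[of "{1..n}" "{1, 2}" "\<lambda>j k. expectation (\<lambda>\<omega>. Z j \<omega> * Z k \<omega>)" 4]
    by (simp add: integral_Z_mult_Z)
  also have "(\<Sum>j\<in>{1..n}. \<Sum>k\<in>{1..n}. expectation (\<lambda>\<omega>. Z j \<omega> * Z k \<omega>))
      = expectation (\<lambda>\<omega>. (\<Sum>k=1..n. Z k \<omega>)\<^sup>2)"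
    using ZZ_int by (simp add: power2_eq_square sum_product Bochner_Integration.integral_sum)
  also have "(\<lambda>\<omega>. (\<Sum>k=1..n. Z k \<omega>)\<^sup>2) = (\<lambda>\<omega>. (real n)\<^sup>2 * (Y n \<omega> - L \<omega>)\<^sup>2)"
    using assms by (simp add: fun_eq_iff Z_def Y_def erw_S_def sum_subtractf field_simps)
  finally have "(real n)\<^sup>2 * expectation (\<lambda>\<omega>. (Y n \<omega> - L \<omega>)\<^sup>2) \<le> 20 * real n"
    by simp
  then show ?thesis
    using assms by (simp add: field_simps power2_eq_square)
qed

lemma r_eq: "r = 1 - p - q"
  using total by simp

definition step_mean :: "(real \<Rightarrow> real) \<Rightarrow> real" where
  "step_mean \<phi> = p * \<phi> 1 + q * \<phi> (-1) + r * \<phi> 0"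

lemma integral_X1_eta2:
  fixes g :: "real \<Rightarrow> real \<Rightarrow> real"
  assumes [measurable]: "(\<lambda>(a, b). g a b) \<in> borel_measurable (borel \<Otimes>\<^sub>M borel)"
    and int: "integrable M (\<lambda>\<omega>. g (X1 \<omega>) (\<eta> 2 \<omega>))"
  shows "expectation (\<lambda>\<omega>. g (X1 \<omega>) (\<eta> 2 \<omega>)) = step_mean (\<lambda>a. step_mean (g a))"
proof -
  have "indep_var borel (\<lambda>\<omega>. block {Inl 1} \<omega> (Inl 1)) borel (\<lambda>\<omega>. block {Inl 2} \<omega> (Inl 2))"
    by (rule indep_var_restrict_compose[OF indep]) (auto simp: erw_index_def)
  then have ind: "indep_var borel X1 borel (\<eta> 2)"
    by (simp add: erw_family_def)
  have "expectation (\<lambda>\<omega>. g (X1 \<omega>) (\<eta> 2 \<omega>)) =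
      expectation (\<lambda>\<omega>. expectation (\<lambda>\<omega>'. g (X1 \<omega>) (\<eta> 2 \<omega>')))"
    by (rule integral_indep_var_iterated[OF ind _ int]) simp
  also have "\<dots> = expectation (\<lambda>\<omega>. step_mean (g (X1 \<omega>)))"
    unfolding step_mean_def
    by (subst integral_three_point[OF eta_law_at(4) eta_law_at(1-3) total]) simp_all
  also have "\<dots> = step_mean (\<lambda>a. step_mean (g a))"
    unfolding step_mean_def
    by (subst integral_three_point[OF X1_measurable X1_law total]) simp_all
  finally show ?thesis .
qed

lemma expectation_L: "expectation L = (p - q)\<^sup>2 / 2 * (1 + p - q)"
proof -
  have "integrable M L"
    using AE_abs_L_le_1 by (intro integrable_const_bound[of _ 1]) auto
  then have "expectation L = step_mean (\<lambda>a. step_mean (\<lambda>b. (p - q) * a * (1 + b) / 2))"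
    unfolding L_def[abs_def] by (intro integral_X1_eta2) simp_all
  also have "\<dots> = (p - q)\<^sup>2 / 2 * (1 + p - q)"
    unfolding step_mean_def by (simp add: r_eq field_simps power2_eq_square)
  finally show ?thesis .
qed

lemma variance_L:
  "variance L = (p - q)\<^sup>2 / 4 * ((p + q) * (1 + 3 * p - q) - (p - q)\<^sup>2 * (1 + (p - q))\<^sup>2)"
proof -
  have int: "integrable M L" "integrable M (\<lambda>\<omega>. (L \<omega>)\<^sup>2)"
    using AE_abs_L_le_1
    by (auto intro!: integrable_const_bound[of _ 1] simp: abs_square_le_1 elim: AE_mp)
  have "expectation (\<lambda>\<omega>. (L \<omega>)\<^sup>2) = step_mean (\<lambda>a. step_mean (\<lambda>b. ((p - q) * a * (1 + b) / 2)\<^sup>2))"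
    using int(2) unfolding L_def[abs_def] by (intro integral_X1_eta2) simp_all
  then have "variance L = step_mean (\<lambda>a. step_mean (\<lambda>b. ((p - q) * a * (1 + b) / 2)\<^sup>2))
      - ((p - q)\<^sup>2 / 2 * (1 + p - q))\<^sup>2"
    by (subst variance_eq[OF int]) (simp add: expectation_L)
  then show ?thesis
    unfolding step_mean_def by (simp add: r_eq field_simps power2_eq_square)
qed

lemma prob_L_le: "prob {\<omega> \<in> space M. L \<omega> \<le> y} = measure (erw_limit p q r) {..y}"
proof -
  have "prob {\<omega> \<in> space M. L \<omega> \<le> y} = expectation (indicator {\<omega> \<in> space M. L \<omega> \<le> y})"
    by simp
  also have "\<dots> = expectation (\<lambda>\<omega>. indicator {..y} (L \<omega>))"
    by (rule Bochner_Integration.integral_cong) (auto simp: indicator_def)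
  also have "\<dots> = step_mean (\<lambda>a. step_mean (\<lambda>b. indicator {..y} ((p - q) * a * (1 + b) / 2)))"
    unfolding L_def[abs_def]
    by (intro integral_X1_eta2) (auto intro!: integrable_const_bound[of _ 1])
  also have "\<dots> = measure (erw_limit p q r) {..y}"
  proof -
    have wf: "pmf_of_list_wf
        [(p - q, p\<^sup>2), ((p - q) / 2, p * r), (0, p * q + q\<^sup>2 + r),
         (-(p - q) / 2, q * r), (-(p - q), p * q)]"
      using law_nonneg
      by (intro pmf_of_list_wfI) (auto, simp add: r_eq power2_eq_square algebra_simps)
    have atoms: "(p - q) * 1 * (1 + 1) / 2 = p - q" "(p - q) * 1 * (1 + 0) / 2 = (p - q) / 2"
      "(p - q) * -1 * (1 + 1) / 2 = -(p - q)" "(p - q) * -1 * (1 + 0) / 2 = -(p - q) / 2"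
      "(p - q) * a * (1 + -1) / 2 = 0" "(p - q) * 0 * (1 + b) / 2 = 0" for a b :: real
      by simp_all
    show ?thesis
      unfolding erw_limit_def measure_pmf_of_list[OF wf] sum_list_filter_fst_in step_mean_def atoms
      by (simp add: r_eq algebra_simps power2_eq_square)
  qed
  finally show ?thesis .
qed

lemma integrable_Y_minus_L_squared: "integrable M (\<lambda>\<omega>. (Y n \<omega> - L \<omega>)\<^sup>2)"
proof (rule integrable_const_bound[of _ "2\<^sup>2"])
  show "AE \<omega> in M. norm ((Y n \<omega> - L \<omega>)\<^sup>2) \<le> 2\<^sup>2"
    using AE_abs_Y_le_1[of n] AE_abs_L_le_1
  proof eventually_elim
    case (elim \<omega>)
    then have "\<bar>Y n \<omega> - L \<omega>\<bar> \<le> 2"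
      by linarith
    then show ?case
      using power2_le_iff_abs_le[of 2 "Y n \<omega> - L \<omega>"] by simp
  qed
qed simp

lemma tendsto_L2_Y_L: "(\<lambda>n. expectation (\<lambda>\<omega>. (Y n \<omega> - L \<omega>)\<^sup>2)) \<longlonglongrightarrow> 0"
proof (rule Lim_null_comparison[OF _ lim_const_over_n[of 20]])
  show "\<forall>\<^sub>F n in sequentially. norm (expectation (\<lambda>\<omega>. (Y n \<omega> - L \<omega>)\<^sup>2)) \<le> 20 / real n"
    using eventually_ge_at_top[of 1]
    by eventually_elim (simp add: integral_Y_minus_L_squared_le)
qed

end

theorem theorem6p1:
  fixes M :: "'a measure" and X1 :: "'a \<Rightarrow> real" and \<eta> :: "nat \<Rightarrow> 'a \<Rightarrow> real"
    and K :: "nat \<Rightarrow> 'a \<Rightarrow> nat" and p q r :: real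
  assumes "prob_space M"
    and "0 < p" "p < 1" "0 < q" "q < 1" "0 < r" "r < 1" "p + q + r = 1"
    and "X1 \<in> borel_measurable M"
    and "measure M {\<omega>\<in>space M. X1 \<omega> = 1} = p"
    and "measure M {\<omega>\<in>space M. X1 \<omega> = -1} = q"
    and "measure M {\<omega>\<in>space M. X1 \<omega> = 0} = r"
    and "\<And>n. n \<ge> 2 \<Longrightarrow> \<eta> n \<in> borel_measurable M"
    and "\<And>n. n \<ge> 2 \<Longrightarrow> measure M {\<omega>\<in>space M. \<eta> n \<omega> = 1} = p"
    and "\<And>n. n \<ge> 2 \<Longrightarrow> measure M {\<omega>\<in>space M. \<eta> n \<omega> = -1} = q"
    and "\<And>n. n \<ge> 2 \<Longrightarrow> measure M {\<omega>\<in>space M. \<eta> n \<omega> = 0} = r"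
    and "\<And>n. n \<ge> 3 \<Longrightarrow> K n \<in> measurable M (count_space UNIV)"
    and "\<And>n. n \<ge> 3 \<Longrightarrow> measure M {\<omega>\<in>space M. K n \<omega> = 1} = 1/2"
    and "\<And>n. n \<ge> 3 \<Longrightarrow> measure M {\<omega>\<in>space M. K n \<omega> = 2} = 1/2"
    and "prob_space.indep_vars M (\<lambda>_. borel) (erw_family X1 \<eta> K) erw_index"
  shows "weak_conv_m (\<lambda>n. distr M borel (\<lambda>\<omega>. erw_S X1 \<eta> K n \<omega> / real n))
           (measure_pmf (erw_limit p q r))
       \<and> (\<lambda>n. integral\<^sup>L M (\<lambda>\<omega>. erw_S X1 \<eta> K n \<omega> / real n))
           \<longlonglongrightarrow> (p - q)^2 / 2 * (1 + p - q)
       \<and> (\<lambda>n. integral\<^sup>L M (\<lambda>\<omega>. (erw_S X1 \<eta> K n \<omega> / real n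
              - integral\<^sup>L M (\<lambda>\<omega>'. erw_S X1 \<eta> K n \<omega>' / real n))^2))
           \<longlonglongrightarrow> (p - q)^2 / 4 * ((p + q) * (1 + 3*p - q) - (p - q)^2 * (1 + (p - q))^2)"
proof -
  interpret erw_two_memory M X1 \<eta> K p q r
    using assms by (simp add: erw_two_memory_def erw_two_memory_axioms_def)
  have Y_eq: "erw_S X1 \<eta> K n \<omega> / real n = Y n \<omega>" for n \<omega>
    by (simp add: Y_def)
  have "weak_conv_m (\<lambda>n. distr M borel (Y n)) (measure_pmf (erw_limit p q r))"
  proof (rule weak_conv_m_of_tendsto_in_prob[where L = L])
    show "(\<lambda>n. prob {\<omega> \<in> space M. \<epsilon> \<le> \<bar>Y n \<omega> - L \<omega>\<bar>}) \<longlonglongrightarrow> 0" if "0 < \<epsilon>" for \<epsilon>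
      using tendsto_prob_deviation_of_L2[OF _ _ integrable_Y_minus_L_squared tendsto_L2_Y_L that]
      by simp
  qed (simp_all add: prob_L_le)
  moreover have "(\<lambda>n. expectation (Y n)) \<longlonglongrightarrow> (p - q)\<^sup>2 / 2 * (1 + p - q)"
    using tendsto_expectation_of_L2[OF _ _ AE_abs_Y_le_1 AE_abs_L_le_1 tendsto_L2_Y_L]
    by (simp add: expectation_L)
  moreover have "(\<lambda>n. variance (Y n)) \<longlonglongrightarrow>
      (p - q)\<^sup>2 / 4 * ((p + q) * (1 + 3 * p - q) - (p - q)\<^sup>2 * (1 + (p - q))\<^sup>2)"
    using tendsto_variance_of_L2[OF _ _ AE_abs_Y_le_1 AE_abs_L_le_1 tendsto_L2_Y_L]
    by (simp add: variance_L)
  ultimately show ?thesis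
    unfolding Y_eq by (intro conjI)
qed

end
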